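(* The string rewriting system $L$ over the alphabet $\{i,0_2,0_3,\lhd,\rhd\}$ with the seven rules $0_2\rhd\to\rhd$, $0_2 i\rhd\to 0_3 i i\rhd$, $0_2 ii\to i0_2$, $i0_3\to 0_3 iii$, $0_20_3\to 0_30_2$, $\lhd i\to\lhd 0_2$, $\lhd 0_3\to \lhd 0_2 i$ is terminating if and only if for every $n\in\mathbb{N}^+$ the trajectory $n,\tau(n),\tau^2(n),\dots$ contains $1$, where $\tau(n)=n/2$ for even $n$ and $\tau(n)=(3n+1)/2$ for odd $n$ (equivalently, iff the Collatz conjecture holds).
   Context: An SRS induces the rewrite relation $u\ell v\to urv$ for each rule $\ell\to r$; it is terminating if no infinite rewrite sequence exists. (Intended reading: $i(x)=x+1$, $0_2(x)=2x$, $0_3(x)=3x$, $\lhd(x)=1$, $\rhd(x)=x$, a string $\lhd d_1\cdots d_k\rhd$ representing $d_k(\cdots d_1(1))$.) *)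

theory Defs
  imports Main
begin

datatype sym = I | O2 | O3 | Lt | Rt

type_synonym srs = "(sym list \<times> sym list) list"

definition srs_step :: "srs \<Rightarrow> sym list \<Rightarrow> sym list \<Rightarrow> bool" where
  "srs_step R s t \<longleftrightarrow> (\<exists>u v l r. (l, r) \<in> set R \<and> s = u @ l @ v \<and> t = u @ r @ v)"

definition srs_terminating :: "srs \<Rightarrow> bool" where
  "srs_terminating R \<longleftrightarrow> \<not> (\<exists>f :: nat \<Rightarrow> sym list. \<forall>n. srs_step R (f n) (f (Suc n)))"

definition L_sys :: srs where
  "L_sys =
    [ ([O2, Rt], [Rt]),
      ([O2, I, Rt], [O3, I, I, Rt]),
      ([O2, I, I], [I, O2]),
      ([I, O3], [O3, I, I, I]),
      ([O2, O3], [O3, O2]),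
      ([Lt, I], [Lt, O2]),
      ([Lt, O3], [Lt, O2, I]) ]"

definition tau :: "nat \<Rightarrow> nat" where
  "tau n = (if even n then n div 2 else (3 * n + 1) div 2)"

end

theory Submission
  imports Defs
begin

text \<open>
If every orbit of tau reaches 1, read a string from left to right, splitting it into blocks at
the brackets. Each block carries its value (the number it represents when read from 1), its
number of 0_2 and a weight; a closing rhd adds to an accumulator the Collatz stopping time of
the value if the block was opened by lhd, and its number of 0_2 otherwise. The two rules at
rhd apply tau to the value of the block (or delete a 0_2), so they lower the accumulator; all
other rules preserve value and number of 0_2 and lower the weight. Hence the accumulated
pair (stopping times, weights) decreases lexicographically along every rewrite step.

Conversely, if the orbit of n avoids 1, then lhd i^(n-1) rhd, a block of value n, admits
forever a rewrite step that keeps the shape lhd u rhd and replaces the value by itself or by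
its tau-image.
\<close>

lemma srs_step_rule: "(l, r) \<in> set R \<Longrightarrow> srs_step R (u @ l @ v) (u @ r @ v)"
  unfolding srs_step_def by blast

lemma not_srs_terminating_if_invariant:
  assumes "P s" and "\<And>s. P s \<Longrightarrow> \<exists>t. srs_step R s t \<and> P t"
  shows "\<not> srs_terminating R"
proof -
  obtain f where "\<forall>n. P (f n) \<and> srs_step R (f n) (f (Suc n))"
    using dependent_nat_choice[where P = "\<lambda>_. P" and Q = "\<lambda>_. srs_step R"] assms by blast
  then show ?thesis unfolding srs_terminating_def by blast
qed

lemma srs_terminating_if_decreasing_interpretation:
  fixes \<delta> :: "sym \<Rightarrow> 's \<Rightarrow> 's" and \<mu> :: "'s \<Rightarrow> 'm"
  assumes "wf W" and "P s\<^sub>0"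
    and P_step: "\<And>c s. P s \<Longrightarrow> P (\<delta> c s)"
    and Q_step: "\<And>c s s'. Q s s' \<Longrightarrow> Q (\<delta> c s) (\<delta> c s')"
    and rule_Q: "\<And>l r s. (l, r) \<in> set R \<Longrightarrow> P s \<Longrightarrow> Q (fold \<delta> l s) (fold \<delta> r s)"
    and Q_decreasing: "\<And>s s'. Q s s' \<Longrightarrow> (\<mu> s', \<mu> s) \<in> W"
  shows "srs_terminating R"
  unfolding srs_terminating_def
proof
  assume "\<exists>f. \<forall>n. srs_step R (f n) (f (Suc n))"
  then obtain f where f: "\<And>n. srs_step R (f n) (f (Suc n))" by blast
  have P_fold: "P (fold \<delta> w s\<^sub>0)" for w
    using \<open>P s\<^sub>0\<close> by (induction w arbitrary: s\<^sub>0) (auto intro: P_step)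
  have Q_fold: "Q (fold \<delta> w s) (fold \<delta> w s')" if "Q s s'" for w s s'
    using that by (induction w arbitrary: s s') (auto intro: Q_step)
  have "(\<mu> (fold \<delta> (f (Suc n)) s\<^sub>0), \<mu> (fold \<delta> (f n) s\<^sub>0)) \<in> W" for n
  proof -
    obtain u v l r where "(l, r) \<in> set R" "f n = u @ l @ v" "f (Suc n) = u @ r @ v"
      using f[of n] unfolding srs_step_def by blast
    then show ?thesis
      using Q_decreasing Q_fold rule_Q P_fold by simp
  qed
  then have "\<exists>g. \<forall>n. (g (Suc n), g n) \<in> W"
    by (intro exI[of _ "\<lambda>n. \<mu> (fold \<delta> (f n) s\<^sub>0)"] allI)
  then show False
    using \<open>wf W\<close> unfolding wf_iff_no_infinite_down_chain by blast
qed

definition collatz_steps :: "nat \<Rightarrow> nat" where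
  "collatz_steps n = (LEAST k. (tau ^^ k) n = 1)"

lemma collatz_steps_tau_less:
  assumes "\<exists>k. (tau ^^ k) n = 1" and "n \<noteq> 1"
  shows "collatz_steps (tau n) < collatz_steps n"
proof -
  have reaches: "(tau ^^ collatz_steps n) n = 1"
    unfolding collatz_steps_def using assms(1) by (rule LeastI_ex)
  then obtain m where m: "collatz_steps n = Suc m"
    using \<open>n \<noteq> 1\<close> by (cases "collatz_steps n") auto
  then have "(tau ^^ m) (tau n) = 1"
    using reaches by (simp add: funpow_Suc_right del: funpow.simps)
  then have "collatz_steps (tau n) \<le> m"
    unfolding collatz_steps_def by (rule Least_le)
  with m show ?thesis by simp
qed

text \<open>
In State A B lt v c x, the pair (A, B) accumulates the closed blocks; lt records whether the
current block was opened by Lt, v is its value, c its number of O2 and x its weight. A block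
starts with weight 2 so that Lt O3 \<rightarrow> Lt O2 I lowers it as well.
\<close>
datatype state = State nat nat bool nat nat nat

fun read_sym :: "sym \<Rightarrow> state \<Rightarrow> state" where
  "read_sym I (State A B lt v c x) = State A B lt (v + 1) c (x + 2)"
| "read_sym O2 (State A B lt v c x) = State A B lt (2 * v) (c + 1) (x + 1)"
| "read_sym O3 (State A B lt v c x) = State A B lt (3 * v) c (4 * x)"
| "read_sym Lt (State A B lt v c x) = State A (B + x) True 1 0 2"
| "read_sym Rt (State A B lt v c x) =
     State (A + (if lt then collatz_steps v else c)) (B + x) False 1 0 2"

fun block_value :: "state \<Rightarrow> nat" where
  "block_value (State A B lt v c x) = v"

fun state_weight :: "state \<Rightarrow> nat \<times> nat" where
  "state_weight (State A B lt v c x) = (A, B + x)"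

text \<open>
A decrease that persists when further symbols are read: when the block is closed, the gap in x
becomes a gap in B, and the clause on v resp. c makes A grow by the same amount on both sides.
\<close>
fun state_greater :: "state \<Rightarrow> state \<Rightarrow> bool" where
  "state_greater (State A B lt v c x) (State A' B' lt' v' c' x') \<longleftrightarrow>
     (A = A' \<and> B = B' \<and> lt = lt' \<and> (if lt then v = v' else c = c') \<and> x > x') \<or>
     ((A > A' \<or> A = A' \<and> B > B') \<and> lt = lt' \<and> v = v' \<and> c = c' \<and> x = x')"

lemma state_greater_read_sym:
  "state_greater s s' \<Longrightarrow> state_greater (read_sym d s) (read_sym d s')"
  by (cases s; cases s'; cases d) auto

lemma state_greater_weight:
  "state_greater s s' \<Longrightarrow> (state_weight s', state_weight s) \<in> less_than <*lex*> less_than"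
  by (cases s; cases s') auto

lemma block_value_read_sym_pos: "block_value s > 0 \<Longrightarrow> block_value (read_sym d s) > 0"
  by (cases s; cases d) auto

lemma L_sys_state_greater:
  assumes collatz: "\<forall>n::nat. n > 0 \<longrightarrow> (\<exists>k. (tau ^^ k) n = 1)"
    and "block_value s > 0" and "(l, r) \<in> set L_sys"
  shows "state_greater (fold read_sym l s) (fold read_sym r s)"
proof -
  obtain A B lt v c x where s: "s = State A B lt v c x" by (cases s)
  have "v > 0" using \<open>block_value s > 0\<close> s by simp
  have reach: "\<exists>k. (tau ^^ k) m = 1" if "m > 0" for m
    using collatz that by blast
  have "collatz_steps v < collatz_steps (2 * v)"
    using collatz_steps_tau_less[OF reach, of "2 * v"] \<open>v > 0\<close> by (simp add: tau_def)
  moreover have "collatz_steps (3 * v + 2) < collatz_steps (2 * v + 1)"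
    using collatz_steps_tau_less[OF reach, of "2 * v + 1"] \<open>v > 0\<close> by (simp add: tau_def)
  ultimately show ?thesis
    using \<open>(l, r) \<in> set L_sys\<close> unfolding L_sys_def s by (auto simp: algebra_simps)
qed

lemma collatz_imp_L_sys_terminating:
  assumes "\<forall>n::nat. n > 0 \<longrightarrow> (\<exists>k. (tau ^^ k) n = 1)"
  shows "srs_terminating L_sys"
  by (rule srs_terminating_if_decreasing_interpretation[where \<delta> = read_sym
        and s\<^sub>0 = "State 0 0 False 1 0 2" and P = "\<lambda>s. block_value s > 0"
        and Q = state_greater and \<mu> = state_weight and W = "less_than <*lex*> less_than"])
    (use assms in \<open>auto intro: block_value_read_sym_pos state_greater_read_sym
      L_sys_state_greater state_greater_weight\<close>)

fun digit :: "sym \<Rightarrow> nat \<Rightarrow> nat" where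
  "digit I x = x + 1"
| "digit O2 x = 2 * x"
| "digit O3 x = 3 * x"
| "digit Lt x = 1"
| "digit Rt x = x"

definition word_val :: "sym list \<Rightarrow> nat" where
  "word_val u = fold digit u 1"

definition digits :: "sym list \<Rightarrow> bool" where
  "digits u \<longleftrightarrow> set u \<subseteq> {I, O2, O3}"

lemma word_val_replicate_I: "word_val (replicate m I) = m + 1"
proof -
  have "(digit I ^^ m) x = x + m" for x
    by (induction m) auto
  then show ?thesis
    unfolding word_val_def fold_replicate by simp
qed

lemma last_O2_step:
  assumes "digits p" and "set q \<subseteq> {I, O3}"
  shows "\<exists>u'. srs_step L_sys (Lt # (p @ O2 # q) @ [Rt]) (Lt # u' @ [Rt]) \<and> digits u' \<and>
    (word_val u' = word_val (p @ O2 # q) \<or> word_val u' = tau (word_val (p @ O2 # q)))"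
proof -
  consider "q = []" | "q = [I]" | q' where "q = I # I # q'" | q' where "q = I # O3 # q'"
    | q' where "q = O3 # q'"
    using assms(2) by (cases q; cases "tl q") auto
  then show ?thesis
  proof cases
    case 1
    then show ?thesis
      using srs_step_rule[of "[O2, Rt]" "[Rt]" L_sys "Lt # p" "[]"] assms
      by (intro exI[of _ p]) (auto simp: L_sys_def word_val_def tau_def digits_def)
  next
    case 2
    then show ?thesis
      using srs_step_rule[of "[O2, I, Rt]" "[O3, I, I, Rt]" L_sys "Lt # p" "[]"] assms
      by (intro exI[of _ "p @ [O3, I, I]"]) (auto simp: L_sys_def word_val_def tau_def digits_def)
  next
    case (3 q')
    then show ?thesis
      using srs_step_rule[of "[O2, I, I]" "[I, O2]" L_sys "Lt # p" "q' @ [Rt]"] assms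
      by (intro exI[of _ "p @ [I, O2] @ q'"]) (auto simp: L_sys_def word_val_def digits_def)
  next
    case (4 q')
    then show ?thesis
      using srs_step_rule[of "[I, O3]" "[O3, I, I, I]" L_sys "Lt # p @ [O2]" "q' @ [Rt]"] assms
      by (intro exI[of _ "p @ [O2, O3, I, I, I] @ q'"])
        (auto simp: L_sys_def word_val_def digits_def numeral_3_eq_3)
  next
    case (5 q')
    then show ?thesis
      using srs_step_rule[of "[O2, O3]" "[O3, O2]" L_sys "Lt # p" "q' @ [Rt]"] assms
      by (intro exI[of _ "p @ [O3, O2] @ q'"]) (auto simp: L_sys_def word_val_def digits_def)
  qed
qed

lemma digits_step:
  assumes "digits u" and "u \<noteq> []"
  shows "\<exists>u'. srs_step L_sys (Lt # u @ [Rt]) (Lt # u' @ [Rt]) \<and> digits u' \<and>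
    (word_val u' = word_val u \<or> word_val u' = tau (word_val u))"
proof -
  consider w where "u = I # w" | w where "u = O3 # w" | "O2 \<in> set u"
    using assms by (cases u) (auto simp: digits_def)
  then show ?thesis
  proof cases
    case (1 w)
    then show ?thesis
      using srs_step_rule[of "[Lt, I]" "[Lt, O2]" L_sys "[]" "w @ [Rt]"] assms(1)
      by (intro exI[of _ "O2 # w"]) (auto simp: L_sys_def word_val_def digits_def numeral_2_eq_2)
  next
    case (2 w)
    then show ?thesis
      using srs_step_rule[of "[Lt, O3]" "[Lt, O2, I]" L_sys "[]" "w @ [Rt]"] assms(1)
      by (intro exI[of _ "O2 # I # w"]) (auto simp: L_sys_def word_val_def digits_def)
  next
    case 3
    then obtain p q where "u = p @ O2 # q" and "O2 \<notin> set q"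
      using split_list_last by metis
    moreover from this have "digits p" and "set q \<subseteq> {I, O3}"
      using assms(1) by (auto simp: digits_def)
    ultimately show ?thesis
      using last_O2_step by blast
  qed
qed

lemma collatz_failure_imp_L_sys_nonterminating:
  assumes "n > 0" and "\<forall>k. (tau ^^ k) n \<noteq> 1"
  shows "\<not> srs_terminating L_sys"
proof -
  define P where "P t \<longleftrightarrow>
    (\<exists>u. t = Lt # u @ [Rt] \<and> digits u \<and> (\<forall>k. (tau ^^ k) (word_val u) \<noteq> 1))" for t
  have "P (Lt # replicate (n - 1) I @ [Rt])"
    using assms by (auto simp: P_def digits_def word_val_replicate_I)
  moreover have "\<exists>t'. srs_step L_sys t t' \<and> P t'" if "P t" for t
  proof -
    obtain u where t: "t = Lt # u @ [Rt]" and "digits u"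
      and orbit: "\<And>k. (tau ^^ k) (word_val u) \<noteq> 1"
      using \<open>P t\<close> unfolding P_def by blast
    have "u \<noteq> []"
      using orbit[of 0] by (auto simp: word_val_def)
    then obtain u' where "srs_step L_sys t (Lt # u' @ [Rt])" and "digits u'"
      and val: "word_val u' = word_val u \<or> word_val u' = tau (word_val u)"
      using digits_step \<open>digits u\<close> t by blast
    moreover have "(tau ^^ k) (word_val u') \<noteq> 1" for k
      using val orbit[of k] orbit[of "Suc k"]
      by (auto simp: funpow_Suc_right simp del: funpow.simps)
    ultimately show ?thesis
      unfolding P_def by blast
  qed
  ultimately show ?thesis
    by (rule not_srs_terminating_if_invariant)
qed

theorem mainTheorem8:
  shows "srs_terminating L_sys \<longleftrightarrow> (\<forall>n::nat. n > 0 \<longrightarrow> (\<exists>k. (tau ^^ k) n = 1))"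
  using collatz_imp_L_sys_terminating collatz_failure_imp_L_sys_nonterminating by blast

end
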